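(* Let $L,J\ge0$ and let $Q_{\ell,j}(x)$, $0\le\ell\le L$, $0\le j\le J$, be polynomials with nonnegative coefficients; set $Q_\ell(x,u)=\sum_{j=0}^JQ_{\ell,j}(x)u^j$. For an integer $m\ge0$ let $G_m(x,u)=\sum_{k\ge0}G_{m;k}(x)u^k$ be the formal power series solution of \[ G_m(x,u)=u^m+x\sum_{\ell=0}^LQ_\ell(x,u)\,\Delta^\ell G_m(x,u). \] Then for all $k\ge0$, $G_{m;k}(x)=F^{[\ge0]}_{k,m}(x)$, i.e. $G_{m;k}(x)$ is the generating function of allowed lattice paths starting at level $k$ and ending at level $m$.
   Context: $\Delta^\ell G(x,u)=\sum_{k\ge0}G_{k+\ell}(x)u^k$ for $G=\sum_kG_k(x)u^k$, $\ell\ge1$, and $\Delta^0G=G$. Step model: for each level $h\ge0$, the multiset $\mathcal S_h$ contains, for every triple $(\ell,j,r)$ with $0\le\ell\le L$, $0\le j\le\min(h,J)$, $r\ge0$, $[x^r]Q_{\ell,j}(x)\ne0$, one labelled step of displacement $(1+r,\ell-j)$ and weight $[x^r]Q_{\ell,j}(x)$. An allowed path starting at level $k$ is a finite sequence of labelled steps starting at $(0,k)$ such that each step belongs to $\mathcal S_h$, $h$ being the level of its starting point; its weight $w(p)$ is the product of its step weights (empty path: weight 1). $F^{[\ge0]}_{k,m}(x)=\sum_{n\ge0}\sum_pw(p)x^n$, summed over allowed paths from $(0,k)$ to $(n,m)$. *)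

theory Defs
  imports "HOL-Computational_Algebra.Polynomial_FPS"
begin

text \<open>Bivariate series in x and u are modelled as series in u whose coefficients
  are series in x: type real fps fps. The outer variable (fps_X) is u; the
  inner variable (fps_const fps_X) is x.\<close>

definition Delta :: "nat \<Rightarrow> 'a fps fps \<Rightarrow> 'a fps fps" where
  "Delta l G = Abs_fps (\<lambda>k. fps_nth G (k + l))"

definition Qbiv :: "nat \<Rightarrow> (nat \<Rightarrow> nat \<Rightarrow> real poly) \<Rightarrow> nat \<Rightarrow> real fps fps" where
  "Qbiv J Q l = (\<Sum>j\<le>J. fps_const (fps_of_poly (Q l j)) * fps_X ^ j)"

text \<open>A labelled step is a triple (l, j, r): displacement (1 + r, l - j),
  weight coeff (Q l j) r. A path is a list of labelled steps.\<close>
fun allowed :: "nat \<Rightarrow> nat \<Rightarrow> (nat \<Rightarrow> nat \<Rightarrow> real poly) \<Rightarrow> nat \<Rightarrow> (nat \<times> nat \<times> nat) list \<Rightarrow> bool" where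
  "allowed L J Q h [] = True"
| "allowed L J Q h ((l, j, r) # ps) =
     (l \<le> L \<and> j \<le> min h J \<and> coeff (Q l j) r \<noteq> 0 \<and> allowed L J Q (h + l - j) ps)"

fun end_level :: "nat \<Rightarrow> (nat \<times> nat \<times> nat) list \<Rightarrow> nat" where
  "end_level h [] = h"
| "end_level h ((l, j, r) # ps) = end_level (h + l - j) ps"

definition x_length :: "(nat \<times> nat \<times> nat) list \<Rightarrow> nat" where
  "x_length ps = sum_list (map (\<lambda>(l, j, r). 1 + r) ps)"

definition path_weight :: "(nat \<Rightarrow> nat \<Rightarrow> real poly) \<Rightarrow> (nat \<times> nat \<times> nat) list \<Rightarrow> real" where
  "path_weight Q ps = prod_list (map (\<lambda>(l, j, r). coeff (Q l j) r) ps)"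

definition F_paths :: "nat \<Rightarrow> nat \<Rightarrow> (nat \<Rightarrow> nat \<Rightarrow> real poly) \<Rightarrow> nat \<Rightarrow> nat \<Rightarrow> real fps" where
  "F_paths L J Q k m = Abs_fps (\<lambda>n.
     \<Sum>ps \<in> {ps. allowed L J Q k ps \<and> end_level k ps = m \<and> x_length ps = n}. path_weight Q ps)"

end

theory Submission
  imports Defs
begin

text \<open>Taking the coefficient of \<open>u\<^sup>k\<close>, the functional equation becomes the recurrence
  \<open>G\<^sub>k = [k = m] + x \<Sum>\<^bsub>l \<le> L\<^esub> \<Sum>\<^bsub>j \<le> min k J\<^esub> Q\<^bsub>l,j\<^esub>(x) G\<^bsub>k+l-j\<^esub>\<close> for the coefficients
  \<open>G\<^sub>k = G\<^bsub>m;k\<^esub>\<close>. Removing the first step of a path shows that the path series \<open>F\<^bsub>k,m\<^esub>\<close>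
  satisfy the same recurrence. Because of the factor \<open>x\<close>, the coefficient of \<open>x\<^sup>n\<close> on the
  right only involves coefficients of order below \<open>n\<close>, so the recurrence has at most one
  solution.\<close>

unbundle fps_syntax

lemma fps_X_fixpoint_unique:
  fixes H H' :: "'i \<Rightarrow> 'a::comm_ring_1 fps"
  assumes causal: "\<And>n K K' k. (\<And>i k'. i \<le> n \<Longrightarrow> K k' $ i = K' k' $ i) \<Longrightarrow> \<Phi> K k $ n = \<Phi> K' k $ n"
    and H: "\<And>k. H k = c k + fps_X * \<Phi> H k"
    and H': "\<And>k. H' k = c k + fps_X * \<Phi> H' k"
  shows "H = H'"
proof -
  have "\<forall>k. H k $ n = H' k $ n" for n
  proof (induction n rule: less_induct)
    case (less n)
    show ?case
    proof
      fix k
      show "H k $ n = H' k $ n"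
      proof (cases n)
        case 0
        then show ?thesis by (subst H, subst H') simp
      next
        case (Suc n')
        with less have "\<Phi> H k $ n' = \<Phi> H' k $ n'"
          by (intro causal) simp
        with Suc show ?thesis by (subst H, subst H') simp
      qed
    qed
  qed
  then show ?thesis by (simp add: fun_eq_iff fps_eq_iff)
qed

lemma fps_mult_nth_cong:
  assumes "\<And>i. i \<le> n \<Longrightarrow> g $ i = g' $ i"
  shows "(f * g) $ n = (f * g') $ n"
  using assms by (simp add: fps_mult_nth)

definition step_transfer ::
    "nat \<Rightarrow> nat \<Rightarrow> (nat \<Rightarrow> nat \<Rightarrow> 'a::comm_ring_1 poly) \<Rightarrow> (nat \<Rightarrow> 'a fps) \<Rightarrow> nat \<Rightarrow> 'a fps" where
  "step_transfer L J Q H k = (\<Sum>l\<le>L. \<Sum>j\<le>min k J. fps_of_poly (Q l j) * H (k + l - j))"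

definition solves_path_recurrence ::
    "nat \<Rightarrow> nat \<Rightarrow> (nat \<Rightarrow> nat \<Rightarrow> 'a::comm_ring_1 poly) \<Rightarrow> nat \<Rightarrow> (nat \<Rightarrow> 'a fps) \<Rightarrow> bool" where
  "solves_path_recurrence L J Q m H \<longleftrightarrow>
     (\<forall>k. H k = (if k = m then 1 else 0) + fps_X * step_transfer L J Q H k)"

lemma step_transfer_nth_cong:
  assumes "\<And>i k'. i \<le> n \<Longrightarrow> H k' $ i = H' k' $ i"
  shows "step_transfer L J Q H k $ n = step_transfer L J Q H' k $ n"
  unfolding step_transfer_def fps_sum_nth
  using assms by (intro sum.cong refl fps_mult_nth_cong) auto

lemma step_transfer_nth:
  "step_transfer L J Q H k $ n =
     (\<Sum>l\<le>L. \<Sum>j\<le>min k J. \<Sum>r\<le>n. coeff (Q l j) r * H (k + l - j) $ (n - r))"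
  by (simp add: step_transfer_def fps_sum_nth fps_mult_nth atLeast0AtMost)

lemma path_recurrence_unique:
  assumes "solves_path_recurrence L J Q m H" and "solves_path_recurrence L J Q m H'"
  shows "H = H'"
  using assms unfolding solves_path_recurrence_def
  by (intro fps_X_fixpoint_unique[where \<Phi> = "step_transfer L J Q"] step_transfer_nth_cong) blast+

lemma Qbiv_nth: "Qbiv J Q l $ i = (if i \<le> J then fps_of_poly (Q l i) else 0)"
  unfolding Qbiv_def fps_sum_nth
  by (simp add: fps_X_power_mult_right_nth if_distrib sum.delta cong: if_cong)

lemma Qbiv_mult_Delta_nth:
  "(Qbiv J Q l * Delta l G) $ k = (\<Sum>j\<le>min k J. fps_of_poly (Q l j) * G $ (k + l - j))"
proof -
  have "(Qbiv J Q l * Delta l G) $ k = (\<Sum>i=0..k. Qbiv J Q l $ i * G $ (k - i + l))"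
    by (simp add: fps_mult_nth Delta_def)
  also have "\<dots> = (\<Sum>i\<in>{0..k}. if i \<le> J then fps_of_poly (Q l i) * G $ (k + l - i) else 0)"
    by (intro sum.cong) (auto simp: Qbiv_nth)
  also have "\<dots> = (\<Sum>j\<le>min k J. fps_of_poly (Q l j) * G $ (k + l - j))"
    by (rule sum.mono_neutral_cong_right) auto
  finally show ?thesis .
qed

lemma functional_equation_imp_path_recurrence:
  assumes "G = fps_X ^ m + fps_const fps_X * (\<Sum>l\<le>L. Qbiv J Q l * Delta l G)"
  shows "solves_path_recurrence L J Q m (fps_nth G)"
  unfolding solves_path_recurrence_def
proof
  fix k
  show "G $ k = (if k = m then 1 else 0) + fps_X * step_transfer L J Q (fps_nth G) k"
    by (subst assms) (simp add: fps_sum_nth Qbiv_mult_Delta_nth step_transfer_def)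
qed

definition level_paths ::
    "nat \<Rightarrow> nat \<Rightarrow> (nat \<Rightarrow> nat \<Rightarrow> real poly) \<Rightarrow> nat \<Rightarrow> nat \<Rightarrow> nat \<Rightarrow> (nat \<times> nat \<times> nat) list set" where
  "level_paths L J Q k m n = {ps. allowed L J Q k ps \<and> end_level k ps = m \<and> x_length ps = n}"

lemma x_length_Nil [simp]: "x_length [] = 0"
  by (simp add: x_length_def)

lemma x_length_Cons [simp]: "x_length ((l, j, r) # ps) = Suc (r + x_length ps)"
  by (simp add: x_length_def)

lemma x_length_eq_0_iff: "x_length ps = 0 \<longleftrightarrow> ps = []"
  by (cases ps) auto

lemma length_le_x_length: "length ps \<le> x_length ps"
  by (induction ps) auto

lemma path_weight_Cons [simp]: "path_weight Q ((l, j, r) # ps) = coeff (Q l j) r * path_weight Q ps"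
  by (simp add: path_weight_def)

lemma allowed_step_bounds:
  "allowed L J Q h ps \<Longrightarrow> (l, j, r) \<in> set ps \<Longrightarrow> l \<le> L \<and> j \<le> J \<and> r < x_length ps"
  by (induction ps arbitrary: h) fastforce+

lemma finite_level_paths: "finite (level_paths L J Q k m n)"
proof (rule finite_subset)
  show "level_paths L J Q k m n \<subseteq> {ps. set ps \<subseteq> {..L} \<times> {..J} \<times> {..n} \<and> length ps \<le> n}"
    unfolding level_paths_def using allowed_step_bounds length_le_x_length
    by clarsimp (metis less_imp_le_nat)
  show "finite {ps. set ps \<subseteq> {..L} \<times> {..J} \<times> {..n} \<and> length ps \<le> n}"
    by (intro finite_lists_length_le) auto
qed

lemma level_paths_0: "level_paths L J Q k m 0 = (if k = m then {[]} else {})"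
  unfolding level_paths_def by (auto simp: x_length_eq_0_iff)

lemma level_paths_Suc:
  "level_paths L J Q k m (Suc n) = (\<lambda>(s, ps). s # ps) `
     (SIGMA (l, j, r) : {(l, j, r). l \<le> L \<and> j \<le> min k J \<and> r \<le> n \<and> coeff (Q l j) r \<noteq> 0}.
        level_paths L J Q (k + l - j) m (n - r))"
proof safe
  fix ps assume "ps \<in> level_paths L J Q k m (Suc n)"
  then obtain l j r ps' where "ps = (l, j, r) # ps'" and "allowed L J Q k ((l, j, r) # ps')"
    and "end_level k ((l, j, r) # ps') = m" and "x_length ((l, j, r) # ps') = Suc n"
    unfolding level_paths_def by (cases ps) auto
  then show "ps \<in> (\<lambda>(s, ps). s # ps) `
     (SIGMA (l, j, r) : {(l, j, r). l \<le> L \<and> j \<le> min k J \<and> r \<le> n \<and> coeff (Q l j) r \<noteq> 0}.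
        level_paths L J Q (k + l - j) m (n - r))"
    by (intro image_eqI[where x = "((l, j, r), ps')"]) (auto simp: level_paths_def)
qed (auto simp: level_paths_def)

lemma F_paths_Suc_nth:
  "F_paths L J Q k m $ Suc n =
     (\<Sum>l\<le>L. \<Sum>j\<le>min k J. \<Sum>r\<le>n. coeff (Q l j) r * F_paths L J Q (k + l - j) m $ (n - r))"
proof -
  define S where "S = {(l, j, r). l \<le> L \<and> j \<le> min k J \<and> r \<le> n \<and> coeff (Q l j) r \<noteq> 0}"
  have "finite S"
    by (rule finite_subset[of _ "{..L} \<times> {..min k J} \<times> {..n}"]) (auto simp: S_def)
  have "F_paths L J Q k m $ Suc n = sum (path_weight Q) (level_paths L J Q k m (Suc n))"
    by (simp add: F_paths_def level_paths_def)
  also have "\<dots> = (\<Sum>(s, ps) \<in> (SIGMA (l, j, r) : S. level_paths L J Q (k + l - j) m (n - r)).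
                     path_weight Q (s # ps))"
    unfolding level_paths_Suc S_def[symmetric]
    by (subst sum.reindex) (auto simp: inj_on_def case_prod_unfold)
  also have "\<dots> = (\<Sum>(l, j, r) \<in> S. \<Sum>ps \<in> level_paths L J Q (k + l - j) m (n - r).
                     coeff (Q l j) r * path_weight Q ps)"
    using \<open>finite S\<close> by (subst sum.Sigma[symmetric]) (auto simp: finite_level_paths intro!: sum.cong)
  also have "\<dots> = (\<Sum>(l, j, r) \<in> S. coeff (Q l j) r * F_paths L J Q (k + l - j) m $ (n - r))"
    by (intro sum.cong) (auto simp: F_paths_def level_paths_def sum_distrib_left)
  also have "\<dots> = (\<Sum>(l, j, r) \<in> {..L} \<times> {..min k J} \<times> {..n}.
                     coeff (Q l j) r * F_paths L J Q (k + l - j) m $ (n - r))"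
    by (rule sum.mono_neutral_left) (auto simp: S_def)
  finally show ?thesis
    by (simp add: sum.cartesian_product)
qed

lemma F_paths_path_recurrence: "solves_path_recurrence L J Q m (\<lambda>k. F_paths L J Q k m)"
  unfolding solves_path_recurrence_def
proof (intro allI fps_ext)
  fix k n
  show "F_paths L J Q k m $ n =
      ((if k = m then 1 else 0) + fps_X * step_transfer L J Q (\<lambda>k. F_paths L J Q k m) k) $ n"
    by (cases n)
      (simp add: F_paths_def level_paths_def[symmetric] level_paths_0 path_weight_def,
       simp add: step_transfer_nth F_paths_Suc_nth)
qed

theorem lemma4:
  fixes L J m :: nat
    and Q :: "nat \<Rightarrow> nat \<Rightarrow> real poly"
    and G :: "real fps fps"
  assumes nonneg: "\<And>l j r. l \<le> L \<Longrightarrow> j \<le> J \<Longrightarrow> coeff (Q l j) r \<ge> 0"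
    and eqn: "G = fps_X ^ m + fps_const fps_X * (\<Sum>l\<le>L. Qbiv J Q l * Delta l G)"
  shows "\<forall>k. fps_nth G k = F_paths L J Q k m"
proof -
  have "fps_nth G = (\<lambda>k. F_paths L J Q k m)"
    using functional_equation_imp_path_recurrence[OF eqn] F_paths_path_recurrence
    by (rule path_recurrence_unique)
  then show ?thesis
    by simp
qed

end
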